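(* Consider $n$ agents over a fixed undirected connected graph with symmetric nonnegative weights $a_{ij}$ and Laplacian $L$ with largest eigenvalue $\lambda_n$, and let $0<h<2/\lambda_n$. The states $x_i(t)\in\mathbb{R}^m$ evolve by $x_i(t+1)=x_i(t)+u_i(t)$ with $$y_i(t)=x_i(t)+h\sum_{j\in N_i}a_{ij}(x_j(t)-x_i(t)),\ \nabla_i(t)=\beta(t)\nabla g_i^+(y_i(t)),\ \xi_i(t)=y_i(t)-\nabla_i(t),$$ $$\varphi_i(t)=\alpha(t)\big(\xi_i(t)-P_{X_i}(\xi_i(t))\big),\ \phi_i(t)=-\nabla_i(t)-\varphi_i(t),\ u_i(t)=h\sum_{j\in N_i}a_{ij}(x_j(t)-x_i(t))+\phi_i(t),$$ for given real sequences $\alpha(t),\beta(t)$. If $\lim_{t\to\infty}\phi_i(t)=0$ for every $i$, then the agents reach consensus asymptotically, i.e. $\lim_{t\to\infty}\|x_i(t)-x_j(t)\|=0$ for all $i,j$.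
   Context: $g_i:\mathbb{R}^m\to\mathbb{R}$ convex continuous, $X_i\subset\mathbb{R}^m$ closed convex, $g_i^+=\max[g_i,0]$, $\nabla g_i^+(y)$ a subgradient of $g_i^+$ at $y$, $P_{X_i}$ Euclidean projection onto $X_i$. Laplacian $L=(l_{ij})$: $l_{ij}=-a_{ij}$ for $i\neq j$, $l_{ii}=\sum_j a_{ij}$. *)

theory Defs
  imports "HOL-Analysis.Analysis"
begin

text \<open>Agents are indexed by a finite type 'n (n = CARD('n)); states live in a
Euclidean space 'a (playing the role of R^m).\<close>

definition neighbors :: "('n \<Rightarrow> 'n \<Rightarrow> real) \<Rightarrow> 'n \<Rightarrow> 'n set" where
  "neighbors a i = {j. j \<noteq> i \<and> a i j > 0}"

definition laplacian :: "('n::finite \<Rightarrow> 'n \<Rightarrow> real) \<Rightarrow> real^'n^'n" where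
  "laplacian a = (\<chi> i j. if i = j then (\<Sum>k\<in>UNIV. a i k) else - a i j)"

definition is_eigenvalue :: "real^'n^'n \<Rightarrow> real \<Rightarrow> bool" where
  "is_eigenvalue M c \<longleftrightarrow> (\<exists>v. v \<noteq> 0 \<and> M *v v = c *\<^sub>R v)"

definition largest_eigenvalue :: "real^'n^'n \<Rightarrow> real" where
  "largest_eigenvalue M = Max {c. is_eigenvalue M c}"

definition connected_graph :: "('n \<Rightarrow> 'n \<Rightarrow> real) \<Rightarrow> bool" where
  "connected_graph a \<longleftrightarrow> (\<forall>i j. (i, j) \<in> {(p, q). a p q > 0}\<^sup>*)"

definition pos_part :: "('a \<Rightarrow> real) \<Rightarrow> 'a \<Rightarrow> real" where
  "pos_part g y = max (g y) 0"

definition is_subgradient :: "('a::real_inner \<Rightarrow> real) \<Rightarrow> 'a \<Rightarrow> 'a \<Rightarrow> bool" where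
  "is_subgradient f y d \<longleftrightarrow> (\<forall>z. f z \<ge> f y + d \<bullet> (z - y))"

end

theory Submission
  imports Defs
begin

text \<open>Fix a direction \<open>b\<close>. The vector \<open>z(t) = (x\<^sub>k(t) \<bullet> b)\<^sub>k\<close> obeys
  \<open>z(t+1) = (I - h L) z(t) + p(t)\<close> with \<open>p(t) \<rightarrow> 0\<close>, where \<open>L\<close> is the graph Laplacian. Since
  \<open>L\<close> is symmetric, \<open>L 1 = 0\<close>, \<open>L\<close> is positive definite on \<open>1\<^sup>\<bottom>\<close> for a connected graph and
  \<open>h \<lambda>\<^sub>n < 2\<close>, the matrix \<open>I - h L\<close> maps \<open>1\<^sup>\<bottom>\<close> into itself as a contraction with some ratio
  \<open>\<rho> < 1\<close>. So the deviation \<open>e(t)\<close> of \<open>z(t)\<close> from its mean satisfies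
  \<open>|e(t+1)| \<le> \<rho> |e(t)| + |p(t)|\<close> and tends to \<open>0\<close>. The subgradient and projection terms enter
  only through \<open>\<phi>\<close>.\<close>

section \<open>Symmetric matrices and quadratic forms\<close>

lemma inner_matrix_vector_symmetric:
  fixes M :: "real^'n::finite^'n"
  assumes "transpose M = M"
  shows "u \<bullet> (M *v w) = (M *v u) \<bullet> w"
  by (metis assms dot_lmul_matrix transpose_matrix_vector)

lemma matrix_vector_mult_id_minus:
  fixes M :: "real^'n::finite^'n"
  shows "(mat 1 - c *\<^sub>R M) *v v = v - c *\<^sub>R (M *v v)"
  by (simp add: matrix_vector_mult_diff_rdistrib scaleR_matrix_vector_assoc[symmetric])

lemma quadratic_form_sgn:
  fixes M :: "real^'n::finite^'n"
  shows "v \<bullet> (M *v v) = (v \<bullet> v) * (sgn v \<bullet> (M *v sgn v))"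
proof (cases "v = 0")
  case False
  then show ?thesis
    by (simp add: sgn_div_norm matrix_vector_mult_scaleR dot_square_norm power2_eq_square field_simps)
qed simp

lemma quadratic_form_continuous:
  fixes M :: "real^'n::finite^'n"
  shows "continuous_on S (\<lambda>v. v \<bullet> (M *v v))"
  by (intro continuous_intros linear_continuous_on) (simp add: linear_conv_bounded_linear[symmetric])

text \<open>If \<open>N v \<noteq> 0\<close>, moving from \<open>v\<close> a little in the direction \<open>-N v\<close> makes the form negative.\<close>
lemma psd_quadratic_form_eq_0_imp_kernel:
  fixes N :: "real^'n::finite^'n"
  assumes sym: "transpose N = N" and psd: "\<And>v. 0 \<le> v \<bullet> (N *v v)"
    and zero: "v \<bullet> (N *v v) = 0"
  shows "N *v v = 0"
proof -
  define w where "w = N *v v"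
  define A where "A = w \<bullet> w"
  define B where "B = w \<bullet> (N *v w)"
  have expand: "0 \<le> t\<^sup>2 * B - 2 * t * A" for t
  proof -
    have "0 \<le> (v - t *\<^sub>R w) \<bullet> (N *v (v - t *\<^sub>R w))" by (rule psd)
    also have "\<dots> = v \<bullet> (N *v v) - t * (w \<bullet> (N *v v)) - t * (v \<bullet> (N *v w)) + t\<^sup>2 * B"
      by (simp add: B_def algebra_simps power2_eq_square)
    also have "v \<bullet> (N *v w) = w \<bullet> (N *v v)"
      using inner_matrix_vector_symmetric[OF sym] by (simp add: inner_commute)
    finally show ?thesis using zero by (simp add: A_def w_def)
  qed
  have "B \<ge> 0" using psd by (simp add: B_def)
  have "A \<le> 0"
  proof (rule ccontr)
    assume "\<not> A \<le> 0"
    then have "0 < A" by simp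
    define t where "t = A / (B + 1)"
    have "0 < t" using \<open>0 < A\<close> \<open>B \<ge> 0\<close> by (simp add: t_def)
    have "t * B < 2 * A"
      using \<open>0 < A\<close> \<open>B \<ge> 0\<close> by (simp add: t_def field_simps add_nonneg_pos)
    then have "t * (t * B) < t * (2 * A)" using \<open>0 < t\<close> by simp
    then show False using expand[of t] by (simp add: power2_eq_square algebra_simps)
  qed
  then have "w \<bullet> w = 0" using inner_ge_zero[of w] by (simp add: A_def)
  then show ?thesis by (simp add: w_def)
qed

lemma symmetric_eigenvalues_finite:
  fixes M :: "real^'n::finite^'n"
  assumes sym: "transpose M = M"
  shows "finite {c. is_eigenvalue M c}"
proof -
  define E where "E = {c. is_eigenvalue M c}"
  have "\<forall>c\<in>E. \<exists>v. v \<noteq> 0 \<and> M *v v = c *\<^sub>R v" by (simp add: E_def is_eigenvalue_def)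
  then obtain f where f: "\<And>c. c \<in> E \<Longrightarrow> f c \<noteq> 0 \<and> M *v f c = c *\<^sub>R f c"
    by metis
  have "inj_on f E"
  proof (rule inj_onI)
    fix c d assume "c \<in> E" "d \<in> E" "f c = f d"
    then have "c *\<^sub>R f c = d *\<^sub>R f c" "f c \<noteq> 0" using f by metis+
    then show "c = d" by simp
  qed
  moreover have "pairwise orthogonal (f ` E)"
    unfolding pairwise_def
  proof (intro ballI impI)
    fix u w assume "u \<in> f ` E" "w \<in> f ` E" "u \<noteq> w"
    then obtain c d where cd: "c \<in> E" "d \<in> E" "u = f c" "w = f d" "c \<noteq> d" by auto
    have "c * (u \<bullet> w) = (M *v u) \<bullet> w" using f cd by simp
    also have "\<dots> = u \<bullet> (M *v w)" using inner_matrix_vector_symmetric[OF sym] by simp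
    also have "\<dots> = d * (u \<bullet> w)" using f cd by simp
    finally show "orthogonal u w" using \<open>c \<noteq> d\<close> by (simp add: orthogonal_def)
  qed
  moreover have "0 \<notin> f ` E" using f by auto
  ultimately have "finite (f ` E)"
    using pairwise_orthogonal_independent independent_imp_finite by blast
  with \<open>inj_on f E\<close> show ?thesis using finite_imageD E_def by blast
qed

text \<open>The maximum of the form on the unit sphere is attained at an eigenvector: the shifted form
  \<open>m |v|\<^sup>2 - v \<bullet> M v\<close> is positive semidefinite and vanishes there.\<close>
lemma symmetric_quadratic_form_max_eigenvalue:
  fixes M :: "real^'n::finite^'n"
  assumes sym: "transpose M = M"
  obtains m where "is_eigenvalue M m" "\<And>v. v \<bullet> (M *v v) \<le> m * (v \<bullet> v)"
proof -
  have "sphere (0::real^'n) 1 \<noteq> {}" by simp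
  then obtain v0 where v0: "v0 \<in> sphere 0 1"
    and max: "\<And>v. v \<in> sphere 0 1 \<Longrightarrow> v \<bullet> (M *v v) \<le> v0 \<bullet> (M *v v0)"
    using continuous_attains_sup[OF compact_sphere _ quadratic_form_continuous] by blast
  define m where "m = v0 \<bullet> (M *v v0)"
  have bound: "v \<bullet> (M *v v) \<le> m * (v \<bullet> v)" for v
  proof (cases "v = 0")
    case False
    then have "sgn v \<bullet> (M *v sgn v) \<le> m" using max[of "sgn v"] by (simp add: m_def norm_sgn)
    then have "(sgn v \<bullet> (M *v sgn v)) * (v \<bullet> v) \<le> m * (v \<bullet> v)"
      by (rule mult_right_mono) simp
    then show ?thesis by (subst quadratic_form_sgn) (simp only: mult.commute)
  qed simp
  define N where "N = m *\<^sub>R mat 1 - M"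
  have N: "N *v v = m *\<^sub>R v - M *v v" for v
    by (simp add: N_def matrix_vector_mult_diff_rdistrib scaleR_matrix_vector_assoc[symmetric])
  have "transpose N = N" using sym by (simp add: N_def transpose_def vec_eq_iff mat_def)
  moreover have "0 \<le> v \<bullet> (N *v v)" for v using bound[of v] by (simp add: N inner_diff_right)
  moreover have "v0 \<bullet> (N *v v0) = 0" using v0 by (simp add: N inner_diff_right m_def dot_square_norm)
  ultimately have "N *v v0 = 0" by (rule psd_quadratic_form_eq_0_imp_kernel)
  then have "is_eigenvalue M m" using v0 unfolding is_eigenvalue_def by (metis N eq_iff_diff_eq_0 mem_sphere_0 norm_zero zero_neq_one)
  then show thesis using bound by (rule that)
qed

lemma quadratic_form_le_largest_eigenvalue:
  fixes M :: "real^'n::finite^'n"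
  assumes sym: "transpose M = M"
  shows "v \<bullet> (M *v v) \<le> largest_eigenvalue M * (v \<bullet> v)"
proof -
  obtain m where "is_eigenvalue M m" and bound: "\<And>v. v \<bullet> (M *v v) \<le> m * (v \<bullet> v)"
    using symmetric_quadratic_form_max_eigenvalue[OF sym] by blast
  then have "m \<le> largest_eigenvalue M"
    unfolding largest_eigenvalue_def using symmetric_eigenvalues_finite[OF sym] by simp
  then show ?thesis using bound[of v] by (meson inner_ge_zero mult_right_mono order_trans)
qed

lemma quadratic_form_coercive_on_subspace:
  fixes M :: "real^'n::finite^'n"
  assumes S: "subspace S" and pos: "\<And>v. v \<in> S \<Longrightarrow> v \<noteq> 0 \<Longrightarrow> 0 < v \<bullet> (M *v v)"
  obtains c where "0 < c" "\<And>v. v \<in> S \<Longrightarrow> c * (v \<bullet> v) \<le> v \<bullet> (M *v v)"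
proof -
  define K where "K = S \<inter> sphere 0 1"
  have sgn_K: "sgn v \<in> K" if "v \<in> S" "v \<noteq> 0" for v
    using that S by (simp add: K_def sgn_div_norm norm_sgn subspace_scale)
  have "compact K" unfolding K_def using S by (intro closed_Int_compact compact_sphere closed_subspace)
  show thesis
  proof (cases "K = {}")
    case True
    then show thesis using sgn_K by (intro that[of 1]) fastforce+
  next
    case False
    then obtain v0 where v0: "v0 \<in> K" and min: "\<And>v. v \<in> K \<Longrightarrow> v0 \<bullet> (M *v v0) \<le> v \<bullet> (M *v v)"
      using continuous_attains_inf[OF \<open>compact K\<close> _ quadratic_form_continuous] by blast
    show thesis
    proof (rule that)
      show "0 < v0 \<bullet> (M *v v0)" using v0 by (intro pos) (auto simp: K_def)
      fix v assume "v \<in> S"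
      show "(v0 \<bullet> (M *v v0)) * (v \<bullet> v) \<le> v \<bullet> (M *v v)"
      proof (cases "v = 0")
        case False
        have "(v0 \<bullet> (M *v v0)) * (v \<bullet> v) \<le> (sgn v \<bullet> (M *v sgn v)) * (v \<bullet> v)"
          using min[OF sgn_K[OF \<open>v \<in> S\<close> False]] by (rule mult_right_mono) simp
        then show ?thesis by (subst quadratic_form_sgn) (simp only: mult.commute)
      qed simp
    qed
  qed
qed

section \<open>The graph Laplacian\<close>

text \<open>The Laplacian of the weighted graph without self-loops, which is the one driving the
  dynamics (neighbours exclude the agent itself); \<open>laplacian\<close> keeps the self-loop weights
  \<open>a i i\<close> on its diagonal.\<close>
definition graph_laplacian :: "('n::finite \<Rightarrow> 'n \<Rightarrow> real) \<Rightarrow> real^'n^'n" where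
  "graph_laplacian a = (\<chi> i j. (if i = j then (\<Sum>k\<in>UNIV. a i k) else 0) - a i j)"

lemma diagonal_matrix_vector_mult:
  "(\<chi> i j. if i = j then d i else 0) *v v = (\<chi> i. d i * v$i)"
proof -
  have "(\<Sum>j\<in>UNIV. (if i = j then d i else 0) * v$j) = (\<Sum>j\<in>UNIV. if i = j then d i * v$j else 0)"
    for i by (rule sum.cong) auto
  then show ?thesis by (simp add: matrix_vector_mult_def vec_eq_iff)
qed

lemma graph_laplacian_apply:
  "(graph_laplacian a *v v) $ i = (\<Sum>j\<in>UNIV. a i j * (v$i - v$j))"
proof -
  have "graph_laplacian a = (\<chi> i j. if i = j then (\<Sum>k\<in>UNIV. a i k) else 0) - (\<chi> i j. a i j)"
    by (simp add: graph_laplacian_def vec_eq_iff)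
  then have "graph_laplacian a *v v = (\<chi> i. (\<Sum>j\<in>UNIV. a i j) * v$i) - (\<chi> i j. a i j) *v v"
    by (simp only: matrix_vector_mult_diff_rdistrib diagonal_matrix_vector_mult)
  then have "(graph_laplacian a *v v) $ i = (\<Sum>j\<in>UNIV. a i j) * v$i - (\<Sum>j\<in>UNIV. a i j * v$j)"
    by (simp add: matrix_vector_mult_def)
  also have "\<dots> = (\<Sum>j\<in>UNIV. a i j * (v$i - v$j))"
    by (simp add: sum_distrib_right right_diff_distrib sum_subtractf)
  finally show ?thesis .
qed

lemma transpose_graph_laplacian:
  assumes "\<And>i j. a i j = a j i"
  shows "transpose (graph_laplacian a) = graph_laplacian a"
  using assms by (auto simp: graph_laplacian_def transpose_def vec_eq_iff)

lemma graph_laplacian_one: "graph_laplacian a *v 1 = 0"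
  by (simp add: vec_eq_iff graph_laplacian_apply)

lemma inner_one_graph_laplacian:
  assumes "\<And>i j. a i j = a j i"
  shows "1 \<bullet> (graph_laplacian a *v v) = 0"
  using inner_matrix_vector_symmetric[OF transpose_graph_laplacian[where a=a, OF assms], where u=1 and w=v]
  by (simp add: graph_laplacian_one)

lemma graph_laplacian_quadratic_form:
  assumes sym: "\<And>i j. a i j = a j i"
  shows "2 * (v \<bullet> (graph_laplacian a *v v)) = (\<Sum>i\<in>UNIV. \<Sum>j\<in>UNIV. a i j * (v$i - v$j)\<^sup>2)"
proof -
  have q: "v \<bullet> (graph_laplacian a *v v) = (\<Sum>i\<in>UNIV. \<Sum>j\<in>UNIV. a i j * (v$i * (v$i - v$j)))"
    by (simp add: inner_vec_def graph_laplacian_apply sum_distrib_left mult.left_commute)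
  also have "\<dots> = (\<Sum>j\<in>UNIV. \<Sum>i\<in>UNIV. a i j * (v$i * (v$i - v$j)))" by (rule sum.swap)
  also have "\<dots> = (\<Sum>i\<in>UNIV. \<Sum>j\<in>UNIV. a i j * (v$j * (v$j - v$i)))" using sym by simp
  finally have q': "v \<bullet> (graph_laplacian a *v v) = \<dots>" .
  have "2 * (v \<bullet> (graph_laplacian a *v v))
      = (\<Sum>i\<in>UNIV. \<Sum>j\<in>UNIV. a i j * (v$i * (v$i - v$j))) + (\<Sum>i\<in>UNIV. \<Sum>j\<in>UNIV. a i j * (v$j * (v$j - v$i)))"
    using q q' by linarith
  also have "\<dots> = (\<Sum>i\<in>UNIV. \<Sum>j\<in>UNIV. a i j * (v$i - v$j)\<^sup>2)"
    by (simp only: sum.distrib[symmetric]) (intro sum.cong refl, simp add: algebra_simps power2_eq_square)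
  finally show ?thesis .
qed

lemma graph_laplacian_le_laplacian:
  assumes "\<And>i j. a i j \<ge> 0"
  shows "v \<bullet> (graph_laplacian a *v v) \<le> v \<bullet> (laplacian a *v v)"
proof -
  have "laplacian a = graph_laplacian a + (\<chi> i j. if i = j then a i i else 0)"
    by (simp add: laplacian_def graph_laplacian_def vec_eq_iff)
  then have "laplacian a *v v = graph_laplacian a *v v + (\<chi> i. a i i * v$i)"
    by (simp only: matrix_vector_mult_add_rdistrib diagonal_matrix_vector_mult)
  then have "v \<bullet> (laplacian a *v v) = v \<bullet> (graph_laplacian a *v v) + (\<Sum>i\<in>UNIV. a i i * (v$i)\<^sup>2)"
    by (simp only: inner_add_right) (simp add: inner_vec_def power2_eq_square mult.left_commute)
  moreover have "0 \<le> (\<Sum>i\<in>UNIV. a i i * (v$i)\<^sup>2)" by (simp add: assms sum_nonneg)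
  ultimately show ?thesis by simp
qed

text \<open>The form vanishes only on vectors that are constant along edges, hence, by connectedness,
  only on multiples of \<open>1\<close>.\<close>
lemma connected_graph_laplacian_pos:
  fixes a :: "'n::finite \<Rightarrow> 'n \<Rightarrow> real" and v :: "real^'n"
  assumes sym: "\<And>i j. a i j = a j i" and nonneg: "\<And>i j. a i j \<ge> 0"
    and conn: "connected_graph a" and sum0: "1 \<bullet> v = 0" and "v \<noteq> 0"
  shows "0 < v \<bullet> (graph_laplacian a *v v)"
proof -
  have terms_nonneg: "0 \<le> a i j * (v$i - v$j)\<^sup>2" for i j by (simp add: nonneg)
  have "0 \<le> 2 * (v \<bullet> (graph_laplacian a *v v))"
    unfolding graph_laplacian_quadratic_form[where a=a and v=v, OF sym] by (intro sum_nonneg terms_nonneg)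
  moreover have "v \<bullet> (graph_laplacian a *v v) \<noteq> 0"
  proof
    assume "v \<bullet> (graph_laplacian a *v v) = 0"
    then have "(\<Sum>i\<in>UNIV. \<Sum>j\<in>UNIV. a i j * (v$i - v$j)\<^sup>2) = 0"
      using graph_laplacian_quadratic_form[where a=a and v=v, OF sym] by simp
    then have "a p q * (v$p - v$q)\<^sup>2 = 0" for p q
      by (simp add: sum_nonneg_eq_0_iff sum_nonneg terms_nonneg)
    then have edge: "v$p = v$q" if "a p q > 0" for p q
      using that by (metis less_irrefl mult_eq_0_iff power_eq_0_iff right_minus_eq)
    have const: "v$i = v$j" for i j
      using conn[unfolded connected_graph_def, rule_format, of i j]
      by (induction rule: rtrancl_induct) (auto dest: edge)
    have "1 \<bullet> v = (\<Sum>j\<in>(UNIV::'n set). v$i)" for i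
      unfolding inner_vec_def inner_real_def one_index mult_1 by (intro sum.cong refl const)
    then have "v$i = 0" for i using sum0 by simp
    then show False using \<open>v \<noteq> 0\<close> by (simp add: vec_eq_iff)
  qed
  ultimately show ?thesis by simp
qed

section \<open>Contraction on the disagreement subspace\<close>

text \<open>Polarization: \<open>4 v \<bullet> W z\<close> is the difference of the form at \<open>v + z\<close> and \<open>v - z\<close>; taking
  for \<open>z\<close> the vector \<open>W v\<close> rescaled to the length of \<open>v\<close> gives \<open>|v| |W v| \<le> \<rho> |v|\<^sup>2\<close>.\<close>
lemma norm_matrix_vector_le_on_invariant_subspace:
  fixes W :: "real^'n::finite^'n"
  assumes sym: "transpose W = W" and S: "subspace S" and inv: "\<And>v. v \<in> S \<Longrightarrow> W *v v \<in> S"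
    and bound: "\<And>v. v \<in> S \<Longrightarrow> \<bar>v \<bullet> (W *v v)\<bar> \<le> \<rho> * (v \<bullet> v)"
    and "0 \<le> \<rho>" and "v \<in> S"
  shows "norm (W *v v) \<le> \<rho> * norm v"
proof (cases "v = 0 \<or> W *v v = 0")
  case True
  then show ?thesis using \<open>0 \<le> \<rho>\<close> by auto
next
  case False
  define w where "w = W *v v"
  define z where "z = (norm v / norm w) *\<^sub>R w"
  have "z \<in> S" using S inv \<open>v \<in> S\<close> by (simp add: z_def w_def subspace_scale)
  have symW: "x \<bullet> (W *v y) = y \<bullet> (W *v x)" for x y
    using inner_matrix_vector_symmetric[OF sym] by (simp add: inner_commute)
  have "4 * (v \<bullet> (W *v z)) = (v + z) \<bullet> (W *v (v + z)) - (v - z) \<bullet> (W *v (v - z))"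
    using symW[of z v] by (simp add: algebra_simps)
  also have "\<dots> \<le> \<rho> * ((v + z) \<bullet> (v + z)) + \<rho> * ((v - z) \<bullet> (v - z))"
    using bound[of "v + z"] bound[of "v - z"] S \<open>v \<in> S\<close> \<open>z \<in> S\<close>
    by (simp add: subspace_add subspace_diff abs_le_iff)
  also have "\<dots> = 2 * \<rho> * (v \<bullet> v + z \<bullet> z)"
    by (simp add: algebra_simps inner_commute)
  also have "z \<bullet> z = v \<bullet> v"
    using False by (simp add: z_def w_def dot_square_norm power_divide)
  finally have "v \<bullet> (W *v z) \<le> \<rho> * (norm v)\<^sup>2" by (simp add: dot_square_norm)
  moreover have "v \<bullet> (W *v z) = norm v * norm w"
    using symW[of v z] False by (simp add: z_def w_def dot_square_norm power2_eq_square)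
  ultimately have "norm v * norm w \<le> norm v * (\<rho> * norm v)" by (simp add: power2_eq_square mult_ac)
  then show ?thesis using False by (simp add: w_def)
qed

text \<open>On \<open>S\<close> the form of \<open>I - h L\<close> takes values in \<open>[1 - h \<mu>, 1 - h c]\<close> relative to \<open>|v|\<^sup>2\<close>,
  an interval inside \<open>(-1, 1)\<close>.\<close>
lemma contraction_on_invariant_subspace:
  fixes L :: "real^'n::finite^'n"
  assumes sym: "transpose L = L" and S: "subspace S" and inv: "\<And>v. v \<in> S \<Longrightarrow> L *v v \<in> S"
    and lower: "\<And>v. v \<in> S \<Longrightarrow> c * (v \<bullet> v) \<le> v \<bullet> (L *v v)"
    and upper: "\<And>v. v \<in> S \<Longrightarrow> v \<bullet> (L *v v) \<le> \<mu> * (v \<bullet> v)"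
    and "0 < c" and "0 < h" and "h * \<mu> < 2"
  obtains \<rho> where "0 \<le> \<rho>" "\<rho> < 1" "\<And>v. v \<in> S \<Longrightarrow> norm ((mat 1 - h *\<^sub>R L) *v v) \<le> \<rho> * norm v"
proof
  define \<rho> where "\<rho> = max (max (h * \<mu> - 1) (1 - h * c)) 0"
  show "0 \<le> \<rho>" and "\<rho> < 1" using assms by (auto simp: \<rho>_def)
  fix v assume "v \<in> S"
  define W where "W = mat 1 - h *\<^sub>R L"
  have W: "W *v v = v - h *\<^sub>R (L *v v)" for v by (simp add: W_def matrix_vector_mult_id_minus)
  have symW: "transpose W = W"
    using sym by (simp add: W_def transpose_def vec_eq_iff mat_def)
  have invW: "W *v v \<in> S" if "v \<in> S" for v using S inv that by (simp add: W subspace_diff subspace_scale)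
  have boundW: "\<bar>v \<bullet> (W *v v)\<bar> \<le> \<rho> * (v \<bullet> v)" if "v \<in> S" for v
  proof -
    have "h * (c * (v \<bullet> v)) \<le> h * (v \<bullet> (L *v v))" "h * (v \<bullet> (L *v v)) \<le> h * (\<mu> * (v \<bullet> v))"
      using lower[OF that] upper[OF that] \<open>0 < h\<close> by simp_all
    moreover have "(1 - h * c) * (v \<bullet> v) \<le> \<rho> * (v \<bullet> v)" "(h * \<mu> - 1) * (v \<bullet> v) \<le> \<rho> * (v \<bullet> v)"
      by (intro mult_right_mono; simp add: \<rho>_def)+
    ultimately show ?thesis by (simp add: W abs_le_iff algebra_simps)
  qed
  have "0 \<le> \<rho>" by (simp add: \<rho>_def)
  from norm_matrix_vector_le_on_invariant_subspace[OF symW S invW boundW this \<open>v \<in> S\<close>]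
  show "norm ((mat 1 - h *\<^sub>R L) *v v) \<le> \<rho> * norm v" by (simp add: W_def)
qed

lemma consensus_matrix_contraction:
  fixes a :: "'n::finite \<Rightarrow> 'n \<Rightarrow> real"
  assumes sym: "\<And>i j. a i j = a j i" and nonneg: "\<And>i j. a i j \<ge> 0"
    and conn: "connected_graph a" and "0 < h" and h_bound: "h < 2 / largest_eigenvalue (laplacian a)"
  obtains \<rho> where "0 \<le> \<rho>" "\<rho> < 1"
    "\<And>v. 1 \<bullet> v = 0 \<Longrightarrow> norm ((mat 1 - h *\<^sub>R graph_laplacian a) *v v) \<le> \<rho> * norm v"
proof -
  define \<mu> where "\<mu> = largest_eigenvalue (laplacian a)"
  have "0 < \<mu>"
    using h_bound \<open>0 < h\<close> unfolding \<mu>_def[symmetric] by (smt (verit) divide_nonneg_nonpos)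
  then have "h * \<mu> < 2" using h_bound by (simp add: \<mu>_def less_divide_eq)
  have "transpose (laplacian a) = laplacian a"
    by (simp add: laplacian_def transpose_def vec_eq_iff sym)
  then have upper: "v \<bullet> (graph_laplacian a *v v) \<le> \<mu> * (v \<bullet> v)" for v
    using graph_laplacian_le_laplacian[where a=a, OF nonneg] quadratic_form_le_largest_eigenvalue
    unfolding \<mu>_def by (meson order_trans)
  obtain c where "0 < c" and lower: "\<And>v. v \<in> {v. 1 \<bullet> v = 0} \<Longrightarrow> c * (v \<bullet> v) \<le> v \<bullet> (graph_laplacian a *v v)"
    using quadratic_form_coercive_on_subspace[OF subspace_hyperplane]
      connected_graph_laplacian_pos[OF sym nonneg conn] by blast
  obtain \<rho> where "0 \<le> \<rho>" "\<rho> < 1"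
    "\<And>v. v \<in> {v. 1 \<bullet> v = 0} \<Longrightarrow> norm ((mat 1 - h *\<^sub>R graph_laplacian a) *v v) \<le> \<rho> * norm v"
    using contraction_on_invariant_subspace[OF transpose_graph_laplacian[where a=a, OF sym]
        subspace_hyperplane _ lower upper \<open>0 < c\<close> \<open>0 < h\<close> \<open>h * \<mu> < 2\<close>]
      inner_one_graph_laplacian[where a=a, OF sym] by blast
  then show thesis by (intro that) auto
qed

section \<open>Consensus\<close>

lemma contractive_recursion_tendsto_zero:
  fixes e r :: "nat \<Rightarrow> real"
  assumes "0 \<le> \<rho>" "\<rho> < 1" and e_nonneg: "\<And>t. 0 \<le> e t"
    and step: "\<And>t. e (Suc t) \<le> \<rho> * e t + r t" and "r \<longlonglongrightarrow> 0"
  shows "e \<longlonglongrightarrow> 0"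
proof (rule LIMSEQ_I)
  fix \<epsilon> :: real assume "0 < \<epsilon>"
  define \<delta> where "\<delta> = \<epsilon> * (1 - \<rho>) / 4"
  have "0 < \<delta>" using \<open>0 < \<epsilon>\<close> \<open>\<rho> < 1\<close> by (simp add: \<delta>_def)
  then obtain N where N: "\<And>t. t \<ge> N \<Longrightarrow> r t < \<delta>"
    using LIMSEQ_D[OF \<open>r \<longlonglongrightarrow> 0\<close>] by force
  have after_N: "e (N + k) \<le> \<rho> ^ k * e N + \<epsilon> / 4" for k
  proof (induction k)
    case (Suc k)
    have "e (N + Suc k) \<le> \<rho> * e (N + k) + r (N + k)" using step[of "N + k"] by simp
    also have "\<dots> \<le> \<rho> * (\<rho> ^ k * e N + \<epsilon> / 4) + \<delta>"
      using N[of "N + k"] Suc.IH \<open>0 \<le> \<rho>\<close> by (intro add_mono mult_left_mono) auto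
    also have "\<dots> = \<rho> ^ Suc k * e N + \<epsilon> / 4" by (simp add: \<delta>_def field_simps)
    finally show ?case .
  qed (use \<open>0 < \<epsilon>\<close> in simp)
  have "(\<lambda>k. \<rho> ^ k * e N) \<longlonglongrightarrow> 0"
    using \<open>0 \<le> \<rho>\<close> \<open>\<rho> < 1\<close> by (intro tendsto_mult_left_zero LIMSEQ_power_zero) simp
  then obtain K where K: "\<And>k. k \<ge> K \<Longrightarrow> \<rho> ^ k * e N < \<epsilon> / 2"
    using LIMSEQ_D[of _ 0 "\<epsilon> / 2"] \<open>0 < \<epsilon>\<close> by force
  have "norm (e n - 0) < \<epsilon>" if "n \<ge> N + K" for n
    using after_N[of "n - N"] K[of "n - N"] e_nonneg[of n] that by (simp add: le_diff_conv2 add.commute)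
  then show "\<exists>n0. \<forall>n\<ge>n0. norm (e n - 0) < \<epsilon>" by blast
qed

text \<open>Subtracting the mean \<open>(1 \<bullet> v / n) 1\<close> commutes with \<open>W\<close>, so the deviation from the
  mean obeys the same recursion on the complement of \<open>1\<close>, where \<open>W\<close> contracts.\<close>
lemma linear_iteration_disagreement_tendsto_zero:
  fixes W :: "real^'n::finite^'n" and z p :: "nat \<Rightarrow> real^'n"
  assumes fix_one: "W *v 1 = 1" and mean_pres: "\<And>v. 1 \<bullet> (W *v v) = 1 \<bullet> v"
    and "0 \<le> \<rho>" "\<rho> < 1" and contr: "\<And>v. 1 \<bullet> v = 0 \<Longrightarrow> norm (W *v v) \<le> \<rho> * norm v"
    and step: "\<And>t. z (Suc t) = W *v z t + p t" and "p \<longlonglongrightarrow> 0"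
  shows "(\<lambda>t. z t $ i - z t $ j) \<longlonglongrightarrow> 0"
proof -
  define dev where "dev v = v - (1 \<bullet> v / real CARD('n)) *\<^sub>R 1" for v :: "real^'n"
  have one_one: "1 \<bullet> (1::real^'n) = real CARD('n)" by (simp add: inner_vec_def)
  have card_nonzero: "real CARD('n) \<noteq> 0" by (simp add: card_eq_0_iff)
  have dev_mean: "1 \<bullet> dev v = 0" for v using card_nonzero by (simp add: dev_def inner_diff_right one_one)
  have dev_step: "dev (z (Suc t)) = W *v dev (z t) + dev (p t)" for t
    by (simp add: dev_def step fix_one mean_pres add_divide_distrib algebra_simps)
  have dev_rec: "norm (dev (z (Suc t))) \<le> \<rho> * norm (dev (z t)) + norm (dev (p t))" for t
    using norm_triangle_ineq[of "W *v dev (z t)" "dev (p t)"] contr[OF dev_mean, of "z t"]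
    by (simp add: dev_step)
  have "(\<lambda>t. dev (p t)) \<longlonglongrightarrow> dev 0"
    unfolding dev_def by (intro tendsto_intros \<open>p \<longlonglongrightarrow> 0\<close> card_nonzero)
  then have "(\<lambda>t. norm (dev (p t))) \<longlonglongrightarrow> 0"
    by (simp add: dev_def tendsto_norm_zero_iff)
  then have "(\<lambda>t. norm (dev (z t))) \<longlonglongrightarrow> 0"
    by (rule contractive_recursion_tendsto_zero[where e="\<lambda>t. norm (dev (z t))",
          OF \<open>0 \<le> \<rho>\<close> \<open>\<rho> < 1\<close> norm_ge_zero dev_rec])
  then have "(\<lambda>t. dev (z t)) \<longlonglongrightarrow> 0" by (simp add: tendsto_norm_zero_iff)
  then have "(\<lambda>t. dev (z t) $ i - dev (z t) $ j) \<longlonglongrightarrow> 0 $ i - 0 $ j"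
    by (intro tendsto_diff tendsto_vec_nth)
  then show ?thesis by (simp add: dev_def)
qed

lemma sum_neighbors_eq_sum_UNIV:
  fixes a :: "'n::finite \<Rightarrow> 'n \<Rightarrow> real" and y :: "'n \<Rightarrow> 'a::real_vector"
  assumes "\<And>i j. a i j \<ge> 0"
  shows "(\<Sum>j\<in>neighbors a i. a i j *\<^sub>R (y j - y i)) = (\<Sum>j\<in>UNIV. a i j *\<^sub>R (y j - y i))"
proof (rule sum.mono_neutral_left)
  show "\<forall>j\<in>UNIV - neighbors a i. a i j *\<^sub>R (y j - y i) = 0"
    using assms by (auto simp: neighbors_def order.strict_iff_order)
qed auto

lemma consensus_step_inner:
  fixes a :: "'n::finite \<Rightarrow> 'n \<Rightarrow> real" and x \<phi> :: "nat \<Rightarrow> 'n \<Rightarrow> 'a::real_inner"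
  assumes nonneg: "\<And>i j. a i j \<ge> 0"
    and step: "\<And>t i. x (Suc t) i = x t i + h *\<^sub>R (\<Sum>j\<in>neighbors a i. a i j *\<^sub>R (x t j - x t i)) + \<phi> t i"
  shows "(\<chi> i. x (Suc t) i \<bullet> b)
    = (mat 1 - h *\<^sub>R graph_laplacian a) *v (\<chi> i. x t i \<bullet> b) + (\<chi> i. \<phi> t i \<bullet> b)"
proof -
  have "x (Suc t) i \<bullet> b = x t i \<bullet> b + h * (\<Sum>j\<in>UNIV. a i j * (x t j \<bullet> b - x t i \<bullet> b)) + \<phi> t i \<bullet> b"
    for i unfolding step sum_neighbors_eq_sum_UNIV[where a=a, OF nonneg]
    by (simp add: inner_add_left inner_sum_left inner_diff_left)
  moreover have "(graph_laplacian a *v v) $ i = - (\<Sum>j\<in>UNIV. a i j * (v$j - v$i))" for i and v :: "real^'n"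
    by (simp add: graph_laplacian_apply sum_negf[symmetric] algebra_simps)
  ultimately show ?thesis by (simp add: vec_eq_iff matrix_vector_mult_id_minus)
qed

theorem proposition3:
  fixes a :: "'n::finite \<Rightarrow> 'n \<Rightarrow> real"
    and h :: real
    and g :: "'n \<Rightarrow> 'a::euclidean_space \<Rightarrow> real"
    and dg :: "'n \<Rightarrow> 'a \<Rightarrow> 'a"
    and X :: "'n \<Rightarrow> 'a set"
    and \<alpha> \<beta> :: "nat \<Rightarrow> real"
    and x :: "nat \<Rightarrow> 'n \<Rightarrow> 'a"
    and y \<xi> grd \<phi>' \<phi> u :: "nat \<Rightarrow> 'n \<Rightarrow> 'a"
  assumes sym: "\<And>i j. a i j = a j i"
    and nonneg: "\<And>i j. a i j \<ge> 0"
    and conn: "connected_graph a"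
    and h_pos: "0 < h"
    and h_bound: "h < 2 / largest_eigenvalue (laplacian a)"
    and g_convex: "\<And>i. convex_on UNIV (g i)"
    and g_cont: "\<And>i. continuous_on UNIV (g i)"
    and dg_sub: "\<And>i z. is_subgradient (pos_part (g i)) z (dg i z)"
    and X_closed: "\<And>i. closed (X i)"
    and X_convex: "\<And>i. convex (X i)"
    and X_ne: "\<And>i. X i \<noteq> {}"
    and y_def: "\<And>t i. y t i = x t i + h *\<^sub>R (\<Sum>j\<in>neighbors a i. a i j *\<^sub>R (x t j - x t i))"
    and grd_def: "\<And>t i. grd t i = \<beta> t *\<^sub>R dg i (y t i)"
    and \<xi>_def: "\<And>t i. \<xi> t i = y t i - grd t i"
    and \<phi>'_def: "\<And>t i. \<phi>' t i = \<alpha> t *\<^sub>R (\<xi> t i - closest_point (X i) (\<xi> t i))"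
    and \<phi>_def: "\<And>t i. \<phi> t i = - grd t i - \<phi>' t i"
    and u_def: "\<And>t i. u t i = h *\<^sub>R (\<Sum>j\<in>neighbors a i. a i j *\<^sub>R (x t j - x t i)) + \<phi> t i"
    and step: "\<And>t i. x (Suc t) i = x t i + u t i"
    and \<phi>_lim: "\<And>i. ((\<lambda>t. \<phi> t i) \<longlongrightarrow> 0) sequentially"
  shows "\<forall>i j. ((\<lambda>t. norm (x t i - x t j)) \<longlongrightarrow> 0) sequentially"
proof -
  obtain \<rho> where "0 \<le> \<rho>" "\<rho> < 1"
    and contr: "\<And>v. 1 \<bullet> v = 0 \<Longrightarrow> norm ((mat 1 - h *\<^sub>R graph_laplacian a) *v v) \<le> \<rho> * norm v"
    using consensus_matrix_contraction[OF sym nonneg conn h_pos h_bound] by blast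
  have fix_one: "(mat 1 - h *\<^sub>R graph_laplacian a) *v 1 = 1"
    by (simp add: matrix_vector_mult_id_minus graph_laplacian_one)
  have mean_pres: "1 \<bullet> ((mat 1 - h *\<^sub>R graph_laplacian a) *v v) = 1 \<bullet> v" for v
    by (simp add: matrix_vector_mult_id_minus inner_diff_right inner_one_graph_laplacian[where a=a, OF sym])
  have x_step: "x (Suc t) i = x t i + h *\<^sub>R (\<Sum>j\<in>neighbors a i. a i j *\<^sub>R (x t j - x t i)) + \<phi> t i"
    for t i by (simp add: step u_def)
  have "(\<lambda>t. (x t i - x t j) \<bullet> b) \<longlonglongrightarrow> 0" if "b \<in> Basis" for i j and b :: 'a
  proof -
    have "(\<lambda>t. \<chi> k. \<phi> t k \<bullet> b) \<longlonglongrightarrow> 0"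
      using tendsto_inner[OF \<phi>_lim tendsto_const] by (intro vec_tendstoI) simp
    from linear_iteration_disagreement_tendsto_zero[OF fix_one mean_pres \<open>0 \<le> \<rho>\<close> \<open>\<rho> < 1\<close> contr
        consensus_step_inner[where a=a and x=x and \<phi>=\<phi>, OF nonneg x_step] this]
    show ?thesis by (simp add: inner_diff_left)
  qed
  then show ?thesis by (simp add: tendsto_componentwise_iff[of "\<lambda>t. x t _ - x t _"] tendsto_norm_zero_iff)
qed

end
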